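(* Let $\widehat\Gamma$ be a timed region graph, let $\mu\in\Delta_{\mathrm{Min}}$ be regionally constant and let $(T^\mu,D^\mu)\models\mathrm{Opt}_{\mathrm{Max}}(\widehat\Gamma\upharpoonright\mu)$. If $\mathrm{Improve}_{\mathrm{Min}}(\mu,(T^\mu,D^\mu))=\mu$, then $(T^\mu,D^\mu)\models\mathrm{Opt}_{\mathrm{MinMax}}(\widehat\Gamma)$.
   Context: Fix $k\in\mathbb N$. Let $C$ be a finite set of clocks. A clock valuation is a function $\nu:C\to[0,k]$; $V$ is the set of clock valuations. For $t\ge 0$ let $(\nu+t)(c)=\nu(c)+t$; for $C'\subseteq C$ let $\mathrm{Reset}(\nu,C')(c)=0$ if $c\in C'$ and $=\nu(c)$ otherwise. Simple clock constraints are $c\bowtie i$ or $c-c'\bowtie i$ with $c,c'\in C$, $i\in\{0,\dots,k\}$, ${\bowtie}\in\{<,>,=,\le,\ge\}$. A clock region is an equivalence class of $V$ under "satisfies the same simple clock constraints"; a clock zone is a convex union of clock regions. For a finite set $L$ of locations, a configuration is $s=(\ell,\nu)\in Q=L\times V$; write $s(c)=\nu(c)$ and $s+t=(\ell,\nu+t)$ (defined if $\nu+t\in V$). A region is $(\ell,P)$ (identified with $\{(\ell,\nu):\nu\in P\}$) for a clock region $P$; $[s]$ is the region containing $s$, $\mathcal R$ the set of regions, $\overline R$ the topological closure of $R$. A zone is a set $\{(\ell,\nu):\nu\in W_\ell\}$ with each $W_\ell$ a clock zone. A timed automaton $\mathcal T=(L,C,S,A,E,\delta,\rho,F)$ consists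 of finite $L$, finite $C$, a zone $S\subseteq Q$ of states, a finite set $A$ of actions, $E:A\to 2^S$ with every $E(a)$ a zone, $\delta:L\times A\to L$, $\rho:A\to 2^C$, and a zone $F\subseteq S$ of final states. For $s=(\ell,\nu)$: $s\to_t s'$ if $s'=s+t$ is defined and $s+t'\in S$ for all $t'\in[0,t]$; $s\xrightarrow{a}s'$ if $s'=(\delta(\ell,a),\mathrm{Reset}(\nu,\rho(a)))$, $s,s'\in S$ and $s\in E(a)$. For $(a,t)\in A\times\mathbb R_{\ge0}$, $\mathrm{Succ}(s,(a,t))=(\delta(\ell,a),\mathrm{Reset}(\nu+t,\rho(a)))$. A reachability-time game is $\Gamma=(\mathcal T,L_{\mathrm{Min}},L_{\mathrm{Max}})$ with $(L_{\mathrm{Min}},L_{\mathrm{Max}})$ a partition of $L$; $S_{\mathrm{Min}}$, $S_{\mathrm{Max}}$, $\mathcal R_{\mathrm{Min}}$, $\mathcal R_{\mathrm{Max}}$ are the states/regions with location in $L_{\mathrm{Min}}$ resp. $L_{\mathrm{Max}}$. Region relations: $R\to_*R'$ if there are $s\in R,s'\in R'$, $t\ge 0$ with $s\to_t s'$; $R\to_{+1}R'$ ($R'$ is the time successor of $R$) if $R\to_*R'$, $R\ne R'$, and $R\to_*R''\to_*R'$ implies $R''\in\{R,R'\}$; $R\xrightarrow aR'$ if there are $s\in R,s'\in R'$ with $s\xrightarrow a s'$. $R$ is thin if for all $s\in R$ and $\varepsilon>0$, $[s+\varepsilon]\neq[s]$. For thin $R''$, $b\in\{0,\dots,k\}$,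 $c\in C$: $R\to_{b,c}R''$ if $R\to_*R''$ and $s+(b-s(c))\in R''$ for all $s\in R$. Simple timed actions: $\mathcal A=A\times\{0,\dots,k\}\times C$; for $\alpha=(a,b,c)$, $t(s,\alpha)=b-s(c)$ if $s(c)\le b$ and $0$ otherwise, and $\mathrm{Succ}(s,\alpha)=\mathrm{Succ}(s,(a,t(s,\alpha)))$. For $F$ defined on $\overline{R'}$: $F^\oplus_\alpha(s)=t(s,\alpha)+F(\mathrm{Succ}(s,\alpha))$ and $F^\boxplus_\alpha(s)=1+F(\mathrm{Succ}(s,\alpha))$. Timed region graph $\widehat\Gamma=(\mathcal R,\mathcal M)$: $(R,\alpha,R')\in\mathcal M$ with $\alpha=(a,b,c)$ iff (i) $R\to_{b,c}R''\xrightarrow aR'$ for some $R''$; or (ii) $R\in\mathcal R_{\mathrm{Min}}$ and $R\to_{b,c}R''\to_{+1}R'''\xrightarrow aR'$ for some $R'',R'''$; or (iii) $R\in\mathcal R_{\mathrm{Max}}$ and $R\to_{b,c}R''$, $R'''\to_{+1}R''$, $R'''\xrightarrow aR'$ for some $R'',R'''$. (For $(R,\alpha,R')\in\mathcal M$ and $s\in R$, $\mathrm{Succ}(s,\alpha)\in\overline{R'}$.) Regional functions: maps $T$ assigning to each region $R$ a function $T(R):\overline R\to\mathbb R\cup\{\infty\}$ (resp. $D(R):\overline R\to\mathbb N\cup\{\infty\}$); $\widetilde T(s)=T([s])(s)$. Lexicographic order: $(x,y)\le^{\mathrm{lex}}(x',y')$ iff $x<x'$, or $x=x'$ and $y\le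 y'$. Strategies and subgraphs: a positional strategy for Min in $\widehat\Gamma$ is a map $\mu:S_{\mathrm{Min}}\to\mathcal M$ with $\mu(s)$ of the form $([s],\alpha,R)$; $\Delta_{\mathrm{Min}}$ is the set of these. $\mu$ is regionally constant if $[s]=[s']$ implies $\mu(s)=\mu(s')$ (write $\mu(R)$); then the strategy subgraph $\widehat\Gamma\upharpoonright\mu$ keeps all moves out of $\mathcal R_{\mathrm{Max}}$ and, out of each $R\in\mathcal R_{\mathrm{Min}}$, only $\mu(R)$. For $s\in S$ let $M_*(s,(T,D))$ be the set of moves $m=([s],\alpha,R')\in\mathcal M$ at which $(T(R')^\oplus_\alpha(s),D(R')^\boxplus_\alpha(s))$ is lexicographically minimal. Fix a function $\mathrm{Choose}$ selecting an element of each nonempty set of moves. $\mathrm{Improve}_{\mathrm{Min}}(\mu,(T,D))(s)=\mu(s)$ if $\mu(s)\in M_*(s,(T,D))$, and $=\mathrm{Choose}(M_*(s,(T,D)))$ otherwise. Optimality equations for a graph $G=(\mathcal R,\mathcal M')$, $\mathcal M'\subseteq\mathcal M$: $(T,D)\models\mathrm{Opt}_{\mathrm{Max}}(G)$ iff $(\widetilde T(s),\widetilde D(s))=(0,0)$ for $s\in F$ and, for all $s\in S\setminus F$, $(\widetilde T(s),\widetilde D(s))=\max^{\mathrm{lex}}\{(T(R')^\oplus_\alpha(s),D(R')^\boxplus_\alpha(s)):([s],\alpha,R')\in\mathcal M'\}$. $(T,D)\models\mathrm{Opt}_{\mathrm{MinMax}}(G)$ iff for $s\in F$ the pair is $(0,0)$,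 for $s\in S_{\mathrm{Min}}\setminus F$ it equals the $\min^{\mathrm{lex}}$ of that set, and for $s\in S_{\mathrm{Max}}\setminus F$ it equals the $\max^{\mathrm{lex}}$ of that set. *)

theory Defs
  imports Main "HOL-Library.Extended_Real" "HOL-Library.Extended_Nat"
begin

type_synonym ('l,'c) conf = "'l \<times> ('c \<Rightarrow> real)"
type_synonym ('l,'c,'a) move = "('l,'c) conf set \<times> ('a \<times> nat \<times> 'c) \<times> ('l,'c) conf set"

record ('l,'c,'a) rtgame =
  kmax  :: nat
  St    :: "('l,'c) conf set"
  En    :: "'a \<Rightarrow> ('l,'c) conf set"
  delta :: "'l \<Rightarrow> 'a \<Rightarrow> 'l"
  rho   :: "'a \<Rightarrow> 'c set"
  Fin   :: "('l,'c) conf set"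
  LMin  :: "'l set"

definition Vals :: "nat \<Rightarrow> ('c \<Rightarrow> real) set" where
  "Vals k = {\<nu>. \<forall>c. 0 \<le> \<nu> c \<and> \<nu> c \<le> real k}"

datatype cmp = CLt | CGt | CEq | CLe | CGe

fun cmpsat :: "cmp \<Rightarrow> real \<Rightarrow> real \<Rightarrow> bool" where
  "cmpsat CLt x y = (x < y)"
| "cmpsat CGt x y = (x > y)"
| "cmpsat CEq x y = (x = y)"
| "cmpsat CLe x y = (x \<le> y)"
| "cmpsat CGe x y = (x \<ge> y)"

datatype 'c ccons = CSingle 'c cmp nat | CDiff 'c 'c cmp nat

fun ccsat :: "('c \<Rightarrow> real) \<Rightarrow> 'c ccons \<Rightarrow> bool" where
  "ccsat \<nu> (CSingle c r i) = cmpsat r (\<nu> c) (real i)"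
| "ccsat \<nu> (CDiff c c' r i) = cmpsat r (\<nu> c - \<nu> c') (real i)"

fun cc_bound :: "'c ccons \<Rightarrow> nat" where
  "cc_bound (CSingle c r i) = i"
| "cc_bound (CDiff c c' r i) = i"

definition simple_cc :: "nat \<Rightarrow> 'c ccons set" where
  "simple_cc k = {g. cc_bound g \<le> k}"

definition reg_equiv :: "nat \<Rightarrow> ('c \<Rightarrow> real) \<Rightarrow> ('c \<Rightarrow> real) \<Rightarrow> bool" where
  "reg_equiv k \<nu> \<nu>' = (\<forall>g\<in>simple_cc k. ccsat \<nu> g \<longleftrightarrow> ccsat \<nu>' g)"

definition clock_regions :: "nat \<Rightarrow> ('c \<Rightarrow> real) set set" where
  "clock_regions k = {{\<nu>'\<in>Vals k. reg_equiv k \<nu> \<nu>'} | \<nu>. \<nu> \<in> Vals k}"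

definition clock_zone :: "nat \<Rightarrow> ('c \<Rightarrow> real) set \<Rightarrow> bool" where
  "clock_zone k W = ((\<exists>X \<subseteq> clock_regions k. W = \<Union>X) \<and>
     (\<forall>x\<in>W. \<forall>y\<in>W. \<forall>u::real. 0 \<le> u \<and> u \<le> 1 \<longrightarrow> (\<lambda>c. (1 - u) * x c + u * y c) \<in> W))"

definition Qs :: "nat \<Rightarrow> ('l,'c) conf set" where
  "Qs k = UNIV \<times> Vals k"

definition is_zone :: "nat \<Rightarrow> ('l,'c) conf set \<Rightarrow> bool" where
  "is_zone k Z = (Z \<subseteq> Qs k \<and> (\<forall>l. clock_zone k {\<nu>. (l, \<nu>) \<in> Z}))"

definition timed_automaton :: "('l,'c,'a) rtgame \<Rightarrow> bool" where
  "timed_automaton G = (is_zone (kmax G) (St G) \<and>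
     (\<forall>a. En G a \<subseteq> St G \<and> is_zone (kmax G) (En G a)) \<and>
     Fin G \<subseteq> St G \<and> is_zone (kmax G) (Fin G))"

definition region_of :: "nat \<Rightarrow> ('l,'c) conf \<Rightarrow> ('l,'c) conf set" where
  "region_of k s = {s'. fst s' = fst s \<and> snd s' \<in> Vals k \<and> reg_equiv k (snd s) (snd s')}"

definition Regions :: "nat \<Rightarrow> ('l,'c) conf set set" where
  "Regions k = {region_of k s | s. s \<in> Qs k}"

definition shift :: "('l,'c) conf \<Rightarrow> real \<Rightarrow> ('l,'c) conf" where
  "shift s t = (fst s, \<lambda>c. snd s c + t)"

definition reset :: "('c \<Rightarrow> real) \<Rightarrow> 'c set \<Rightarrow> ('c \<Rightarrow> real)" where
  "reset \<nu> C' = (\<lambda>c. if c \<in> C' then 0 else \<nu> c)"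

definition delay :: "('l,'c,'a) rtgame \<Rightarrow> ('l,'c) conf \<Rightarrow> real \<Rightarrow> ('l,'c) conf \<Rightarrow> bool" where
  "delay G s t s' = (t \<ge> 0 \<and> s' = shift s t \<and> snd s' \<in> Vals (kmax G) \<and>
     (\<forall>t'\<in>{0..t}. shift s t' \<in> St G))"

definition action_step :: "('l,'c,'a) rtgame \<Rightarrow> ('l,'c) conf \<Rightarrow> 'a \<Rightarrow> ('l,'c) conf \<Rightarrow> bool" where
  "action_step G s a s' = (s' = (delta G (fst s) a, reset (snd s) (rho G a)) \<and>
     s \<in> St G \<and> s' \<in> St G \<and> s \<in> En G a)"

definition reach_star :: "('l,'c,'a) rtgame \<Rightarrow> ('l,'c) conf set \<Rightarrow> ('l,'c) conf set \<Rightarrow> bool" where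
  "reach_star G R R' = (\<exists>s\<in>R. \<exists>s'\<in>R'. \<exists>t\<ge>0. delay G s t s')"

definition time_succ :: "('l,'c,'a) rtgame \<Rightarrow> ('l,'c) conf set \<Rightarrow> ('l,'c) conf set \<Rightarrow> bool" where
  "time_succ G R R' = (reach_star G R R' \<and> R \<noteq> R' \<and>
     (\<forall>R''\<in>Regions (kmax G). reach_star G R R'' \<and> reach_star G R'' R' \<longrightarrow> R'' = R \<or> R'' = R'))"

definition reg_action :: "('l,'c,'a) rtgame \<Rightarrow> ('l,'c) conf set \<Rightarrow> 'a \<Rightarrow> ('l,'c) conf set \<Rightarrow> bool" where
  "reg_action G R a R' = (\<exists>s\<in>R. \<exists>s'\<in>R'. action_step G s a s')"

definition thin :: "nat \<Rightarrow> ('l,'c) conf set \<Rightarrow> bool" where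
  "thin k R = (\<forall>s\<in>R. \<forall>\<epsilon>>0. region_of k (shift s \<epsilon>) \<noteq> region_of k s)"

definition bc_step :: "('l,'c,'a) rtgame \<Rightarrow> ('l,'c) conf set \<Rightarrow> nat \<Rightarrow> 'c \<Rightarrow> ('l,'c) conf set \<Rightarrow> bool" where
  "bc_step G R b c R'' = (thin (kmax G) R'' \<and> reach_star G R R'' \<and>
     (\<forall>s\<in>R. shift s (real b - snd s c) \<in> R''))"

definition tdelay :: "('l,'c) conf \<Rightarrow> ('a \<times> nat \<times> 'c) \<Rightarrow> real" where
  "tdelay s \<alpha> = (case \<alpha> of (a, b, c) \<Rightarrow> if snd s c \<le> real b then real b - snd s c else 0)"

definition succ :: "('l,'c,'a) rtgame \<Rightarrow> ('l,'c) conf \<Rightarrow> ('a \<times> real) \<Rightarrow> ('l,'c) conf" where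
  "succ G s x = (delta G (fst s) (fst x), reset (\<lambda>c. snd s c + snd x) (rho G (fst x)))"

definition succ_sta :: "('l,'c,'a) rtgame \<Rightarrow> ('l,'c) conf \<Rightarrow> ('a \<times> nat \<times> 'c) \<Rightarrow> ('l,'c) conf" where
  "succ_sta G s \<alpha> = succ G s (fst \<alpha>, tdelay s \<alpha>)"

definition RMin :: "('l,'c,'a) rtgame \<Rightarrow> ('l,'c) conf set set" where
  "RMin G = {R\<in>Regions (kmax G). \<forall>s\<in>R. fst s \<in> LMin G}"

definition RMax :: "('l,'c,'a) rtgame \<Rightarrow> ('l,'c) conf set set" where
  "RMax G = {R\<in>Regions (kmax G). \<forall>s\<in>R. fst s \<notin> LMin G}"

definition SMin :: "('l,'c,'a) rtgame \<Rightarrow> ('l,'c) conf set" where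
  "SMin G = {s\<in>St G. fst s \<in> LMin G}"

definition SMax :: "('l,'c,'a) rtgame \<Rightarrow> ('l,'c) conf set" where
  "SMax G = {s\<in>St G. fst s \<notin> LMin G}"

definition moves :: "('l,'c,'a) rtgame \<Rightarrow> ('l,'c,'a) move set" where
  "moves G = {(R, (a, b, c), R') | R a b c R'.
     R \<in> Regions (kmax G) \<and> R' \<in> Regions (kmax G) \<and> b \<le> kmax G \<and>
     ((\<exists>R''\<in>Regions (kmax G). bc_step G R b c R'' \<and> reg_action G R'' a R') \<or>
      (R \<in> RMin G \<and> (\<exists>R''\<in>Regions (kmax G). \<exists>R'''\<in>Regions (kmax G).
          bc_step G R b c R'' \<and> time_succ G R'' R''' \<and> reg_action G R''' a R')) \<or>
      (R \<in> RMax G \<and> (\<exists>R''\<in>Regions (kmax G). \<exists>R'''\<in>Regions (kmax G).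
          bc_step G R b c R'' \<and> time_succ G R''' R'' \<and> reg_action G R''' a R')))}"

definition plusT :: "('l,'c,'a) rtgame \<Rightarrow> (('l,'c) conf set \<Rightarrow> ('l,'c) conf \<Rightarrow> ereal)
    \<Rightarrow> ('a \<times> nat \<times> 'c) \<Rightarrow> ('l,'c) conf set \<Rightarrow> ('l,'c) conf \<Rightarrow> ereal" where
  "plusT G T \<alpha> R' s = ereal (tdelay s \<alpha>) + T R' (succ_sta G s \<alpha>)"

definition boxD :: "('l,'c,'a) rtgame \<Rightarrow> (('l,'c) conf set \<Rightarrow> ('l,'c) conf \<Rightarrow> enat)
    \<Rightarrow> ('a \<times> nat \<times> 'c) \<Rightarrow> ('l,'c) conf set \<Rightarrow> ('l,'c) conf \<Rightarrow> enat" where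
  "boxD G D \<alpha> R' s = 1 + D R' (succ_sta G s \<alpha>)"

definition mval :: "('l,'c,'a) rtgame \<Rightarrow> (('l,'c) conf set \<Rightarrow> ('l,'c) conf \<Rightarrow> ereal)
    \<Rightarrow> (('l,'c) conf set \<Rightarrow> ('l,'c) conf \<Rightarrow> enat) \<Rightarrow> ('l,'c) conf \<Rightarrow> ('l,'c,'a) move \<Rightarrow> ereal \<times> enat" where
  "mval G T D s m = (case m of (R, \<alpha>, R') \<Rightarrow> (plusT G T \<alpha> R' s, boxD G D \<alpha> R' s))"

definition lex_le :: "ereal \<times> enat \<Rightarrow> ereal \<times> enat \<Rightarrow> bool" where
  "lex_le p q = (fst p < fst q \<or> (fst p = fst q \<and> snd p \<le> snd q))"

definition is_lexmax :: "ereal \<times> enat \<Rightarrow> (ereal \<times> enat) set \<Rightarrow> bool" where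
  "is_lexmax p X = (p \<in> X \<and> (\<forall>q\<in>X. lex_le q p))"

definition is_lexmin :: "ereal \<times> enat \<Rightarrow> (ereal \<times> enat) set \<Rightarrow> bool" where
  "is_lexmin p X = (p \<in> X \<and> (\<forall>q\<in>X. lex_le p q))"

definition regval :: "nat \<Rightarrow> (('l,'c) conf set \<Rightarrow> ('l,'c) conf \<Rightarrow> 'v) \<Rightarrow> ('l,'c) conf \<Rightarrow> 'v" where
  "regval k T s = T (region_of k s) s"

definition opt_vals :: "('l,'c,'a) rtgame \<Rightarrow> ('l,'c,'a) move set
    \<Rightarrow> (('l,'c) conf set \<Rightarrow> ('l,'c) conf \<Rightarrow> ereal) \<Rightarrow> (('l,'c) conf set \<Rightarrow> ('l,'c) conf \<Rightarrow> enat)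
    \<Rightarrow> ('l,'c) conf \<Rightarrow> (ereal \<times> enat) set" where
  "opt_vals G Ms T D s = {mval G T D s m | m. m \<in> Ms \<and> fst m = region_of (kmax G) s}"

definition OptMax :: "('l,'c,'a) rtgame \<Rightarrow> ('l,'c,'a) move set
    \<Rightarrow> (('l,'c) conf set \<Rightarrow> ('l,'c) conf \<Rightarrow> ereal) \<Rightarrow> (('l,'c) conf set \<Rightarrow> ('l,'c) conf \<Rightarrow> enat) \<Rightarrow> bool" where
  "OptMax G Ms T D =
     ((\<forall>s\<in>Fin G. (regval (kmax G) T s, regval (kmax G) D s) = (0, 0)) \<and>
      (\<forall>s\<in>St G - Fin G. is_lexmax (regval (kmax G) T s, regval (kmax G) D s) (opt_vals G Ms T D s)))"

definition OptMinMax :: "('l,'c,'a) rtgame \<Rightarrow> ('l,'c,'a) move set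
    \<Rightarrow> (('l,'c) conf set \<Rightarrow> ('l,'c) conf \<Rightarrow> ereal) \<Rightarrow> (('l,'c) conf set \<Rightarrow> ('l,'c) conf \<Rightarrow> enat) \<Rightarrow> bool" where
  "OptMinMax G Ms T D =
     ((\<forall>s\<in>Fin G. (regval (kmax G) T s, regval (kmax G) D s) = (0, 0)) \<and>
      (\<forall>s\<in>SMin G - Fin G. is_lexmin (regval (kmax G) T s, regval (kmax G) D s) (opt_vals G Ms T D s)) \<and>
      (\<forall>s\<in>SMax G - Fin G. is_lexmax (regval (kmax G) T s, regval (kmax G) D s) (opt_vals G Ms T D s)))"

definition min_strategy :: "('l,'c,'a) rtgame \<Rightarrow> (('l,'c) conf \<Rightarrow> ('l,'c,'a) move) \<Rightarrow> bool" where
  "min_strategy G \<mu> = (\<forall>s\<in>SMin G. \<mu> s \<in> moves G \<and> fst (\<mu> s) = region_of (kmax G) s)"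

definition regionally_constant :: "('l,'c,'a) rtgame \<Rightarrow> (('l,'c) conf \<Rightarrow> ('l,'c,'a) move) \<Rightarrow> bool" where
  "regionally_constant G \<mu> =
     (\<forall>s\<in>SMin G. \<forall>s'\<in>SMin G. region_of (kmax G) s = region_of (kmax G) s' \<longrightarrow> \<mu> s = \<mu> s')"

definition strategy_subgraph :: "('l,'c,'a) rtgame \<Rightarrow> (('l,'c) conf \<Rightarrow> ('l,'c,'a) move) \<Rightarrow> ('l,'c,'a) move set" where
  "strategy_subgraph G \<mu> = {m \<in> moves G. fst m \<in> RMax G \<or> (\<exists>s\<in>SMin G. m = \<mu> s)}"

definition Mstar :: "('l,'c,'a) rtgame \<Rightarrow> (('l,'c) conf set \<Rightarrow> ('l,'c) conf \<Rightarrow> ereal)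
    \<Rightarrow> (('l,'c) conf set \<Rightarrow> ('l,'c) conf \<Rightarrow> enat) \<Rightarrow> ('l,'c) conf \<Rightarrow> ('l,'c,'a) move set" where
  "Mstar G T D s = {m \<in> moves G. fst m = region_of (kmax G) s \<and>
      (\<forall>m'\<in>moves G. fst m' = region_of (kmax G) s \<longrightarrow> lex_le (mval G T D s m) (mval G T D s m'))}"

definition improve_min :: "('l,'c,'a) rtgame \<Rightarrow> (('l,'c,'a) move set \<Rightarrow> ('l,'c,'a) move)
    \<Rightarrow> (('l,'c) conf \<Rightarrow> ('l,'c,'a) move)
    \<Rightarrow> (('l,'c) conf set \<Rightarrow> ('l,'c) conf \<Rightarrow> ereal) \<Rightarrow> (('l,'c) conf set \<Rightarrow> ('l,'c) conf \<Rightarrow> enat)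
    \<Rightarrow> ('l,'c) conf \<Rightarrow> ('l,'c,'a) move" where
  "improve_min G Choose \<mu> T D s =
     (if \<mu> s \<in> Mstar G T D s then \<mu> s else Choose (Mstar G T D s))"

end

theory Submission
  imports Defs "HOL-Library.Product_Lexorder"
begin

(* Let (T,D) solve the Max-optimality equations of the strategy subgraph of mu.
   - At final states both equation systems demand the value (0,0).
   - At a Max configuration the strategy subgraph keeps every move of the full
     region graph, so the two sets of candidate values coincide.
   - At a Min configuration s the only move of the subgraph out of [s] is mu(s),
     by regional constancy; hence (T,D)(s) is the value of mu(s).  Because the
     region graph is finite, the set M_*(s) of lexicographically minimal moves
     is nonempty, so a proper Choose picks inside it and the fixed point
     hypothesis forces mu(s) into M_*(s), i.e. its value is the lexicographic
     minimum over all moves. *)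

lemma UNIV_cmp: "(UNIV :: cmp set) = {CLt, CGt, CEq, CLe, CGe}"
  using cmp.exhaust by auto

lemma finite_simple_cc: "finite (simple_cc k :: ('c::finite) ccons set)"
proof -
  have "(simple_cc k :: 'c ccons set) \<subseteq> (\<lambda>(c,r,i). CSingle c r i) ` (UNIV \<times> UNIV \<times> {..k})
                     \<union> (\<lambda>(c,c',r,i). CDiff c c' r i) ` (UNIV \<times> UNIV \<times> UNIV \<times> {..k})"
  proof
    fix g :: "'c ccons" assume g: "g \<in> simple_cc k"
    show "g \<in> (\<lambda>(c,r,i). CSingle c r i) ` (UNIV \<times> UNIV \<times> {..k})
                  \<union> (\<lambda>(c,c',r,i). CDiff c c' r i) ` (UNIV \<times> UNIV \<times> UNIV \<times> {..k})"
    proof (cases g)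
      case (CSingle c r i)
      then have "g = (\<lambda>(c,r,i). CSingle c r i) (c, r, i)" "i \<le> k"
        using g by (auto simp: simple_cc_def)
      then show ?thesis by blast
    next
      case (CDiff c c' r i)
      then have "g = (\<lambda>(c,c',r,i). CDiff c c' r i) (c, c', r, i)" "i \<le> k"
        using g by (auto simp: simple_cc_def)
      then show ?thesis by blast
    qed
  qed
  moreover have "finite (UNIV :: cmp set)" by (simp add: UNIV_cmp)
  ultimately show ?thesis by (simp add: finite_subset)
qed

text \<open>A region is determined by its location and by the set of simple constraints
  its valuations satisfy; hence there are finitely many regions.\<close>
lemma finite_Regions: "finite (Regions k :: ('l::finite,'c::finite) conf set set)"
proof -
  define region_by :: "'l \<times> 'c ccons set \<Rightarrow> ('l,'c) conf set" where
    "region_by = (\<lambda>(l, X). {s'. fst s' = l \<and> snd s' \<in> Vals k \<and> {g\<in>simple_cc k. ccsat (snd s') g} = X})"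
  have "region_of k s = region_by (fst s, {g\<in>simple_cc k. ccsat (snd s) g})" for s :: "('l,'c) conf"
    unfolding region_of_def region_by_def reg_equiv_def by auto
  then have "Regions k \<subseteq> region_by ` (UNIV \<times> Pow (simple_cc k))"
    unfolding Regions_def by auto
  moreover have "finite (region_by ` (UNIV \<times> Pow (simple_cc k)))"
    by (intro finite_imageI finite_cartesian_product) (use finite_simple_cc in auto)
  ultimately show ?thesis by (rule finite_subset)
qed

lemma finite_moves: "finite (moves G :: ('l::finite,'c::finite,'a::finite) move set)"
proof -
  have "moves G \<subseteq> Regions (kmax G) \<times> (UNIV \<times> {..kmax G} \<times> UNIV) \<times> Regions (kmax G)"
    unfolding moves_def by blast
  then show ?thesis
    by (rule finite_subset) (intro finite_cartesian_product finite_Regions; simp)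
qed

text \<open>The lexicographic order of the paper is the product order of Product_Lexorder,
  which is linear on \<open>ereal \<times> enat\<close>.\<close>
lemma lex_le_iff: "lex_le p q \<longleftrightarrow> p \<le> q"
  by (cases p; cases q) (auto simp: lex_le_def)

lemma Mstar_nonempty:
  fixes G :: "('l::finite, 'c::finite, 'a::finite) rtgame"
  assumes "m \<in> moves G" and "fst m = region_of (kmax G) s"
  shows "Mstar G T D s \<noteq> {}"
proof -
  let ?Ms = "{m \<in> moves G. fst m = region_of (kmax G) s}"
  have "finite ?Ms" using finite_moves[of G] by simp
  moreover have "?Ms \<noteq> {}" using assms by blast
  ultimately obtain m0 where "is_arg_min (mval G T D s) (\<lambda>m. m \<in> ?Ms) m0"
    using ex_is_arg_min_if_finite by blast
  then have "m0 \<in> Mstar G T D s"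
    unfolding is_arg_min_def Mstar_def lex_le_iff by (auto simp: not_less)
  then show ?thesis by blast
qed

lemma improve_min_fixed_in_Mstar:
  assumes "\<forall>X. X \<noteq> {} \<longrightarrow> Choose X \<in> X"
    and "Mstar G T D s \<noteq> {}"
    and "improve_min G Choose \<mu> T D s = \<mu> s"
  shows "\<mu> s \<in> Mstar G T D s"
  using assms unfolding improve_min_def by (metis (full_types))

lemma is_lexmin_of_Mstar:
  assumes "m \<in> Mstar G T D s"
  shows "is_lexmin (mval G T D s m) (opt_vals G (moves G) T D s)"
  using assms unfolding is_lexmin_def opt_vals_def Mstar_def by blast

lemma region_of_self: "s \<in> Qs k \<Longrightarrow> s \<in> region_of k s"
  by (auto simp: region_of_def Qs_def reg_equiv_def)

lemma region_of_in_Regions: "s \<in> Qs k \<Longrightarrow> region_of k s \<in> Regions k"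
  unfolding Regions_def by blast

lemma fst_region_of: "s' \<in> region_of k s \<Longrightarrow> fst s' = fst s"
  by (simp add: region_of_def)

lemma region_of_SMax_in_RMax:
  assumes "s \<in> SMax G" and "s \<in> Qs (kmax G)"
  shows "region_of (kmax G) s \<in> RMax G"
proof -
  have "\<forall>s'\<in>region_of (kmax G) s. fst s' \<notin> LMin G"
    using assms(1) fst_region_of by (fastforce simp: SMax_def)
  then show ?thesis using region_of_in_Regions[OF assms(2)] by (simp add: RMax_def)
qed

lemma region_of_SMin_notin_RMax:
  "s \<in> SMin G \<Longrightarrow> s \<in> Qs (kmax G) \<Longrightarrow> region_of (kmax G) s \<notin> RMax G"
  using region_of_self by (fastforce simp: RMax_def SMin_def)

lemma opt_vals_strategy_subgraph_Max:
  "region_of (kmax G) s \<in> RMax G \<Longrightarrow>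
     opt_vals G (strategy_subgraph G \<mu>) T D s = opt_vals G (moves G) T D s"
  by (auto simp: opt_vals_def strategy_subgraph_def)

lemma opt_vals_strategy_subgraph_Min:
  assumes strat: "min_strategy G \<mu>" and const: "regionally_constant G \<mu>"
    and s: "s \<in> SMin G" "s \<in> Qs (kmax G)"
  shows "opt_vals G (strategy_subgraph G \<mu>) T D s = {mval G T D s (\<mu> s)}"
proof -
  have "m = \<mu> s"
    if m: "m \<in> strategy_subgraph G \<mu>" "fst m = region_of (kmax G) s" for m
  proof -
    have "fst m \<in> RMax G \<or> (\<exists>s'\<in>SMin G. m = \<mu> s')"
      using m(1) by (simp add: strategy_subgraph_def)
    then obtain s' where s': "s' \<in> SMin G" "m = \<mu> s'"
      using m(2) region_of_SMin_notin_RMax[OF s] by auto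
    then have "region_of (kmax G) s' = region_of (kmax G) s"
      using m(2) strat by (auto simp: min_strategy_def)
    then show ?thesis using const s' s(1) unfolding regionally_constant_def by metis
  qed
  moreover have "\<mu> s \<in> strategy_subgraph G \<mu>" "fst (\<mu> s) = region_of (kmax G) s"
    using strat s(1) by (auto simp: min_strategy_def strategy_subgraph_def)
  ultimately show ?thesis unfolding opt_vals_def by blast
qed

theorem mainTheorem16:
  fixes G :: "('l::finite, 'c::finite, 'a::finite) rtgame"
    and Choose :: "('l,'c,'a) move set \<Rightarrow> ('l,'c,'a) move"
    and \<mu> :: "('l,'c) conf \<Rightarrow> ('l,'c,'a) move"
    and T :: "('l,'c) conf set \<Rightarrow> ('l,'c) conf \<Rightarrow> ereal"
    and D :: "('l,'c) conf set \<Rightarrow> ('l,'c) conf \<Rightarrow> enat"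
  assumes "timed_automaton G"
    and "\<forall>X. X \<noteq> {} \<longrightarrow> Choose X \<in> X"
    and "min_strategy G \<mu>"
    and "regionally_constant G \<mu>"
    and "OptMax G (strategy_subgraph G \<mu>) T D"
    and "\<forall>s\<in>SMin G. improve_min G Choose \<mu> T D s = \<mu> s"
  shows "OptMinMax G (moves G) T D"
proof -
  let ?val = "\<lambda>s. (regval (kmax G) T s, regval (kmax G) D s)"
  have in_Qs: "s \<in> Qs (kmax G)" if "s \<in> St G" for s
    using assms(1) that by (auto simp: timed_automaton_def is_zone_def)
  have sub: "\<forall>s\<in>St G - Fin G. is_lexmax (?val s) (opt_vals G (strategy_subgraph G \<mu>) T D s)"
    using assms(5) by (simp add: OptMax_def)
  have "is_lexmax (?val s) (opt_vals G (moves G) T D s)" if s: "s \<in> SMax G - Fin G" for s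
  proof -
    have "s \<in> St G" using s by (simp add: SMax_def)
    then have "region_of (kmax G) s \<in> RMax G"
      using s in_Qs region_of_SMax_in_RMax by blast
    then have "opt_vals G (moves G) T D s = opt_vals G (strategy_subgraph G \<mu>) T D s"
      by (simp add: opt_vals_strategy_subgraph_Max)
    then show ?thesis using sub s \<open>s \<in> St G\<close> by simp
  qed
  moreover have "is_lexmin (?val s) (opt_vals G (moves G) T D s)" if s: "s \<in> SMin G - Fin G" for s
  proof -
    have "s \<in> St G" "s \<in> Qs (kmax G)" using s in_Qs by (auto simp: SMin_def)
    then have "is_lexmax (?val s) (opt_vals G (strategy_subgraph G \<mu>) T D s)"
      and "opt_vals G (strategy_subgraph G \<mu>) T D s = {mval G T D s (\<mu> s)}"
      using sub s opt_vals_strategy_subgraph_Min[OF assms(3,4)] by blast+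
    then have "?val s = mval G T D s (\<mu> s)"
      by (simp add: is_lexmax_def)
    moreover have "Mstar G T D s \<noteq> {}"
      using assms(3) s by (intro Mstar_nonempty) (auto simp: min_strategy_def)
    then have "\<mu> s \<in> Mstar G T D s"
      using improve_min_fixed_in_Mstar assms(2,6) s by blast
    ultimately show ?thesis using is_lexmin_of_Mstar by metis
  qed
  ultimately show ?thesis using assms(5) by (simp add: OptMinMax_def OptMax_def)
qed

end
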